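(* There exists a set $W \subseteq \mathbb{Z}$ such that $W + W = \mathbb{Z}$ and $W$ contains no 3-term arithmetic progression.
   Context: For $X, Y \subseteq \mathbb{Z}$, $X + Y = \{x + y : x \in X, y \in Y\}$. A 3-term arithmetic progression in $W$ is a triple $w - d, w, w + d$ of elements of $W$ with $d \neq 0$. *)

theory Defs
  imports Main
begin

definition sumset :: "int set \<Rightarrow> int set \<Rightarrow> int set" where
  "sumset X Y = {x + y | x y. x \<in> X \<and> y \<in> Y}"

definition has_3AP :: "int set \<Rightarrow> bool" where
  "has_3AP W \<longleftrightarrow> (\<exists>w d. d \<noteq> 0 \<and> w - d \<in> W \<and> w \<in> W \<and> w + d \<in> W)"

end

(* Take the integers whose base-9 expansion uses only the digits -2, 0, 1, 3. Every residue
   mod 9 is a sum of two such digits, so peeling off the last digit and descending on |n|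
   writes every integer as a sum of two elements. Conversely a + c = 2b between three such
   integers forces a + c = 2b (mod 9) on their last digits, whose only solution in
   {-2, 0, 1, 3} is the trivial one; cancelling that digit and inducting shows a = c. *)
theory Submission
  imports Defs
begin

inductive_set digit_expansions :: "int \<Rightarrow> int set \<Rightarrow> int set" for q D where
  zero: "0 \<in> digit_expansions q D"
| digit: "w \<in> digit_expansions q D \<Longrightarrow> d \<in> D \<Longrightarrow> d + q * w \<in> digit_expansions q D"

lemma digit_expansions_last_digit:
  assumes "0 \<in> D" and "w \<in> digit_expansions q D"
  obtains d w' where "d \<in> D" "w' \<in> digit_expansions q D" "w = d + q * w'"
  using assms(2)
proof cases
  case zero
  then show ?thesis using that[of 0 0] assms(1) digit_expansions.zero by simp
qed (use that in blast)

lemma abs_quotient_le: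
  fixes n e q k :: int
  assumes "n = e + q * k" and "\<bar>e\<bar> < q - 1"
  shows "\<bar>k\<bar> \<le> \<bar>n\<bar>" and "n \<noteq> 0 \<Longrightarrow> \<bar>k\<bar> < \<bar>n\<bar>"
proof -
  have "q * \<bar>k\<bar> \<le> \<bar>n\<bar> + \<bar>e\<bar>"
    using assms(1) abs_triangle_ineq4[of n e] assms(2) by (simp add: abs_mult)
  moreover have "q * \<bar>k\<bar> = \<bar>k\<bar> + (q - 1) * \<bar>k\<bar>"
    by (simp add: algebra_simps)
  moreover have "q - 1 \<le> (q - 1) * \<bar>k\<bar>" if "k \<noteq> 0"
    using that mult_left_mono[of 1 "\<bar>k\<bar>" "q - 1"] assms(2) by simp
  ultimately have less: "\<bar>k\<bar> < \<bar>n\<bar>" if "k \<noteq> 0"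
    using that assms(2) by linarith
  then show "\<bar>k\<bar> \<le> \<bar>n\<bar>"
    by fastforce
  show "\<bar>k\<bar> < \<bar>n\<bar>" if "n \<noteq> 0"
    using less that by fastforce
qed

lemma sumset_digit_expansions_UNIV:
  assumes "0 \<in> D"
    and residues: "\<And>n. \<exists>d1\<in>D. \<exists>d2\<in>D. q dvd n - (d1 + d2)"
    and small: "\<And>d. d \<in> D \<Longrightarrow> 2 * \<bar>d\<bar> < q - 1"
  shows "sumset (digit_expansions q D) (digit_expansions q D) = UNIV"
proof -
  let ?W = "digit_expansions q D"
  have "n \<in> sumset ?W ?W" for n
  proof (induction "nat \<bar>n\<bar>" arbitrary: n rule: less_induct)
    case less
    show ?case
    proof (cases "n = 0")
      case True
      then show ?thesis
        using digit_expansions.zero unfolding sumset_def by force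
    next
      case False
      obtain d1 d2 where d: "d1 \<in> D" "d2 \<in> D" and "q dvd n - (d1 + d2)"
        using residues by blast
      then obtain n' where "n - (d1 + d2) = q * n'"
        by (elim dvdE)
      then have n': "n = (d1 + d2) + q * n'"
        by simp
      have "\<bar>d1 + d2\<bar> < q - 1"
        using small[OF d(1)] small[OF d(2)] by linarith
      then have "nat \<bar>n'\<bar> < nat \<bar>n\<bar>"
        using abs_quotient_le(2)[OF n'] False by simp
      then have "n' \<in> sumset ?W ?W"
        by (rule less)
      then obtain x y where "x \<in> ?W" "y \<in> ?W" "n' = x + y"
        unfolding sumset_def by blast
      moreover from this d have "d1 + q * x \<in> ?W" "d2 + q * y \<in> ?W"
        by (auto intro: digit_expansions.digit)
      moreover have "n = (d1 + q * x) + (d2 + q * y)"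
        using n' \<open>n' = x + y\<close> by (simp add: algebra_simps)
      ultimately show ?thesis
        unfolding sumset_def by blast
    qed
  qed
  then show ?thesis
    by blast
qed

context
  fixes q :: int and D :: "int set"
  assumes q_nonzero: "q \<noteq> 0"
    and zero_digit: "0 \<in> D"
    and digits_no_mod_3AP: "\<And>a b c. a \<in> D \<Longrightarrow> b \<in> D \<Longrightarrow> c \<in> D \<Longrightarrow> q dvd a + c - 2 * b
                              \<Longrightarrow> a = b \<and> c = b"
begin

lemma digit_expansions_midpoint_last_digit:
  assumes "a = da + q * a'" "c = dc + q * c'" "m = dm + q * m'"
    and "da \<in> D" "dc \<in> D" "dm \<in> D" and "a + c = 2 * m"
  shows "da = dm" "dc = dm" "a' + c' = 2 * m'"
proof -
  have "da + dc - 2 * dm = q * (2 * m' - a' - c')"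
    using assms(1-3,7) by (simp add: algebra_simps)
  then have "q dvd da + dc - 2 * dm"
    by simp
  then show "da = dm" "dc = dm"
    using digits_no_mod_3AP assms(4-6) by blast+
  then have "q * (a' + c') = q * (2 * m')"
    using assms(1-3,7) by (simp add: algebra_simps)
  then show "a' + c' = 2 * m'"
    using q_nonzero by simp
qed

(* The case a = 0 of the next lemma, proved separately: 0 = 0 + q * 0 is its own
   last-digit decomposition, so induction on a makes no progress there. *)
lemma digit_expansions_double_eq_zero:
  "c \<in> digit_expansions q D \<Longrightarrow> m \<in> digit_expansions q D \<Longrightarrow> c = 2 * m \<Longrightarrow> c = 0"
proof (induction arbitrary: m rule: digit_expansions.induct)
  case zero
  then show ?case by simp
next
  case (digit c' dc)
  obtain dm m' where m: "dm \<in> D" "m' \<in> digit_expansions q D" "m = dm + q * m'"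
    using digit_expansions_last_digit[OF zero_digit digit.prems(1)] .
  have "0 + (dc + q * c') = 2 * m"
    using digit.prems(2) by simp
  from digit_expansions_midpoint_last_digit[of 0 0 0 _ dc c', OF _ refl m(3) zero_digit
      digit.hyps(2) m(1) this]
  have "dc = 0" "c' = 2 * m'"
    by simp_all
  then show ?case
    using digit.IH[OF m(2)] by simp
qed

lemma digit_expansions_midpoint_eq:
  "a \<in> digit_expansions q D \<Longrightarrow> c \<in> digit_expansions q D \<Longrightarrow> m \<in> digit_expansions q D
    \<Longrightarrow> a + c = 2 * m \<Longrightarrow> a = c"
proof (induction arbitrary: c m rule: digit_expansions.induct)
  case zero
  then show ?case
    using digit_expansions_double_eq_zero by simp
next
  case (digit a' da)
  obtain dc c' where c: "dc \<in> D" "c' \<in> digit_expansions q D" "c = dc + q * c'"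
    using digit_expansions_last_digit[OF zero_digit digit.prems(1)] .
  obtain dm m' where m: "dm \<in> D" "m' \<in> digit_expansions q D" "m = dm + q * m'"
    using digit_expansions_last_digit[OF zero_digit digit.prems(2)] .
  note last = digit_expansions_midpoint_last_digit[OF refl c(3) m(3) digit.hyps(2) c(1) m(1)
      digit.prems(3)]
  then show ?case
    using digit.IH[OF c(2) m(2) last(3)] c(3) by simp
qed

lemma not_has_3AP_digit_expansions: "\<not> has_3AP (digit_expansions q D)"
  unfolding has_3AP_def
  using digit_expansions_midpoint_eq[of "w - d" "w + d" w for w d] by force

end

theorem proposition3:
  shows "\<exists>W :: int set. sumset W W = UNIV \<and> \<not> has_3AP W"
proof (intro exI conjI)
  let ?D = "{-2, 0, 1, 3 :: int}"
  have residues: "\<exists>d1\<in>?D. \<exists>d2\<in>?D. 9 dvd n - (d1 + d2)" for n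
    by simp presburger
  show "sumset (digit_expansions 9 ?D) (digit_expansions 9 ?D) = UNIV"
    by (rule sumset_digit_expansions_UNIV[OF _ residues]) auto
  have "\<forall>a\<in>?D. \<forall>b\<in>?D. \<forall>c\<in>?D. 9 dvd a + c - 2 * b \<longrightarrow> a = b \<and> c = b"
    by simp
  then show "\<not> has_3AP (digit_expansions 9 ?D)"
    by (intro not_has_3AP_digit_expansions) auto
qed

end
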